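(* Let $G=(K\cup I,E)$ be a split graph such that no vertex $i\in I$ satisfies $N(i)=K$, and let $(V,\mathcal{F})$ be its split graph vertex shelling antimatroid. Then the number of paths of $(V,\mathcal{F})$ equals $|V|$ plus the number of edges of $G$ having one endpoint in $K$ and the other in $I$.
   Context: A split graph $G=(K\cup I,E)$ is a finite simple graph whose vertex set $V=K\cup I$ comes with a fixed partition into a clique $K$ and an independent set $I$. $N(v)$ is the set of neighbours of $v$. A vertex is simplicial if its neighbours induce a clique. The split graph vertex shelling antimatroid of $G$ is $(V,\mathcal{F})$ where $F\subseteq V$ is feasible iff there is an ordering $f_1,\dots,f_{|F|}$ of $F$ such that each $f_j$ is simplicial in $G$ minus $\{f_1,\dots,f_{j-1}\}$ (the empty set is feasible). A path of an antimatroid $(V,\mathcal{F})$ is a nonempty feasible set that is not the union of two feasible sets both different from it (equivalently, a feasible set containing exactly one element whose removal leaves a feasible set). *)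

theory Defs
  imports Main
begin

definition simple_graph :: "'a set \<Rightarrow> ('a \<Rightarrow> 'a \<Rightarrow> bool) \<Rightarrow> bool" where
  "simple_graph V E \<longleftrightarrow> finite V \<and> (\<forall>u v. E u v \<longrightarrow> u \<in> V \<and> v \<in> V)
     \<and> (\<forall>u v. E u v \<longrightarrow> E v u) \<and> (\<forall>v. \<not> E v v)"

definition split_graph :: "'a set \<Rightarrow> 'a set \<Rightarrow> ('a \<Rightarrow> 'a \<Rightarrow> bool) \<Rightarrow> bool" where
  "split_graph K I E \<longleftrightarrow> simple_graph (K \<union> I) E \<and> K \<inter> I = {}
     \<and> (\<forall>u\<in>K. \<forall>v\<in>K. u \<noteq> v \<longrightarrow> E u v)
     \<and> (\<forall>u\<in>I. \<forall>v\<in>I. \<not> E u v)"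

definition nbhd :: "'a set \<Rightarrow> ('a \<Rightarrow> 'a \<Rightarrow> bool) \<Rightarrow> 'a \<Rightarrow> 'a set" where
  "nbhd V E v = {u \<in> V. E v u}"

definition simplicial_in :: "'a set \<Rightarrow> ('a \<Rightarrow> 'a \<Rightarrow> bool) \<Rightarrow> 'a \<Rightarrow> bool" where
  "simplicial_in W E v \<longleftrightarrow> v \<in> W \<and>
     (\<forall>x\<in>nbhd W E v. \<forall>y\<in>nbhd W E v. x \<noteq> y \<longrightarrow> E x y)"

definition shelling_feasible :: "'a set \<Rightarrow> ('a \<Rightarrow> 'a \<Rightarrow> bool) \<Rightarrow> 'a set \<Rightarrow> bool" where
  "shelling_feasible V E F \<longleftrightarrow> (\<exists>fs. distinct fs \<and> set fs = F \<and>
     (\<forall>j < length fs. simplicial_in (V - set (take j fs)) E (fs ! j)))"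

definition antimatroid_path :: "('a set \<Rightarrow> bool) \<Rightarrow> 'a set \<Rightarrow> bool" where
  "antimatroid_path feas P \<longleftrightarrow> feas P \<and> P \<noteq> {} \<and>
     \<not> (\<exists>A B. feas A \<and> feas B \<and> A \<noteq> P \<and> B \<noteq> P \<and> P = A \<union> B)"

end

theory Submission
  imports Defs
begin

text \<open>A path of an antimatroid has exactly one element whose removal leaves a feasible set, its
root. For the split graph shelling the candidate paths are: \<open>{i}\<close> for \<open>i \<in> I\<close>; \<open>k\<close> together
with its neighbours in \<open>I\<close> for \<open>k \<in> K\<close>; and, for every edge \<open>ki\<close> with \<open>k \<in> K\<close>, \<open>i \<in> I\<close>,
the vertex \<open>k\<close> together with the clique vertices not adjacent to \<open>i\<close>, their neighbours in
\<open>I\<close>, and the neighbours of \<open>k\<close> in \<open>I\<close> other than \<open>i\<close>. Each candidate is feasible and stays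
feasible after deleting its root; every feasible set containing \<open>x\<close> contains a candidate rooted
at \<open>x\<close> (if \<open>k\<close> is shelled while its neighbour \<open>i\<close> is still present, every remaining neighbour
of \<open>k\<close> is adjacent to \<open>i\<close>); and candidates with a common root are incomparable, which is
where no \<open>i \<in> I\<close> may see all of \<open>K\<close>. These facts force the paths to be exactly the
candidates, one per vertex and one per edge between \<open>K\<close> and \<open>I\<close>.\<close>

lemma antimatroid_paths_eq_rooted_family:
  fixes feas :: "'a set \<Rightarrow> bool" and C :: "'l \<Rightarrow> 'a set" and root :: "'l \<Rightarrow> 'a"
  assumes root_in: "\<And>l. l \<in> L \<Longrightarrow> root l \<in> C l"
    and feas_C: "\<And>l. l \<in> L \<Longrightarrow> feas (C l)"
    and feas_C_minus_root: "\<And>l. l \<in> L \<Longrightarrow> feas (C l - {root l})"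
    and C_below: "\<And>P x. feas P \<Longrightarrow> x \<in> P \<Longrightarrow> \<exists>l\<in>L. root l = x \<and> C l \<subseteq> P"
    and C_antichain: "\<And>l l'. l \<in> L \<Longrightarrow> l' \<in> L \<Longrightarrow> root l = root l' \<Longrightarrow> C l \<subseteq> C l' \<Longrightarrow> l = l'"
    and accessible: "\<And>P. feas P \<Longrightarrow> P \<noteq> {} \<Longrightarrow> \<exists>e\<in>P. feas (P - {e})"
  shows "{P. antimatroid_path feas P} = C ` L" and "inj_on C L"
proof -
  have fill: "A = C l" if l: "l \<in> L" and A: "feas A" "A \<subseteq> C l" "root l \<in> A" for l A
  proof -
    obtain l' where l': "l' \<in> L" "root l' = root l" "C l' \<subseteq> A"
      using C_below[OF A(1,3)] by blast
    then have "l' = l" using C_antichain[OF l'(1) l] A(2) by blast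
    with l' A(2) show ?thesis by blast
  qed
  show inj: "inj_on C L"
  proof (rule inj_onI)
    fix l l' assume l: "l \<in> L" "l' \<in> L" and C_eq: "C l = C l'"
    show "l = l'"
    proof (cases "root l = root l'")
      case True
      with l C_eq show ?thesis using C_antichain by simp
    next
      case False
      then have "root l \<in> C l' - {root l'}" using root_in[OF l(1)] C_eq by simp
      then have "C l' - {root l'} = C l"
        using fill[OF l(1) feas_C_minus_root[OF l(2)]] C_eq by blast
      then show ?thesis using root_in[OF l(2)] C_eq by blast
    qed
  qed
  have "antimatroid_path feas P \<longleftrightarrow> P \<in> C ` L" for P
  proof
    assume P: "antimatroid_path feas P"
    then have "feas P" "P \<noteq> {}" unfolding antimatroid_path_def by simp_all
    then obtain e where e: "e \<in> P" "feas (P - {e})" using accessible by blast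
    obtain l where l: "l \<in> L" "root l = e" "C l \<subseteq> P" using C_below[OF \<open>feas P\<close> e(1)] by blast
    have "P = (P - {e}) \<union> C l" using root_in[OF l(1)] l(2,3) by blast
    moreover have "P - {e} \<noteq> P" using e(1) by blast
    ultimately have "C l = P" using P feas_C[OF l(1)] e(2) unfolding antimatroid_path_def by blast
    with l(1) show "P \<in> C ` L" by blast
  next
    assume "P \<in> C ` L"
    then obtain l where l: "l \<in> L" "P = C l" by blast
    have "A = P \<or> B = P" if "feas A" "feas B" "P = A \<union> B" for A B
    proof -
      have "root l \<in> A \<or> root l \<in> B" using root_in[OF l(1)] l(2) that(3) by blast
      then show ?thesis using fill[OF l(1)] that l(2) by blast
    qed
    moreover have "feas P" "P \<noteq> {}" using feas_C root_in l by auto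
    ultimately show "antimatroid_path feas P" unfolding antimatroid_path_def by blast
  qed
  then show "{P. antimatroid_path feas P} = C ` L" by blast
qed

definition shelling_sequence :: "'a set \<Rightarrow> ('a \<Rightarrow> 'a \<Rightarrow> bool) \<Rightarrow> 'a list \<Rightarrow> bool" where
  "shelling_sequence V E fs \<longleftrightarrow> distinct fs \<and>
     (\<forall>j < length fs. simplicial_in (V - set (take j fs)) E (fs ! j))"

lemma shelling_feasible_iff_sequence:
  "shelling_feasible V E F \<longleftrightarrow> (\<exists>fs. shelling_sequence V E fs \<and> set fs = F)"
  unfolding shelling_feasible_def shelling_sequence_def by blast

lemma shelling_sequenceD:
  assumes "shelling_sequence V E fs"
  shows "distinct fs" and "\<And>j. j < length fs \<Longrightarrow> simplicial_in (V - set (take j fs)) E (fs ! j)"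
  using assms unfolding shelling_sequence_def by simp_all

lemma shelling_sequence_take:
  "shelling_sequence V E fs \<Longrightarrow> shelling_sequence V E (take m fs)"
  unfolding shelling_sequence_def by (simp add: min_def)

lemma shelling_sequence_append:
  assumes "shelling_sequence V E fs" "simplicial_in (V - set fs) E x"
  shows "shelling_sequence V E (fs @ [x])"
proof -
  have "x \<notin> set fs" using assms(2) unfolding simplicial_in_def by blast
  moreover have "simplicial_in (V - set (take j (fs @ [x]))) E ((fs @ [x]) ! j)"
    if "j < length (fs @ [x])" for j
  proof (cases "j < length fs")
    case True
    then show ?thesis using assms(1) unfolding shelling_sequence_def by (simp add: nth_append)
  next
    case False
    with that have "j = length fs" by simp
    then show ?thesis using assms(2) by simp
  qed
  ultimately show ?thesis using assms(1) unfolding shelling_sequence_def by simp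
qed

lemma simplicial_inI:
  assumes "x \<in> W" "\<And>u. u \<in> W \<Longrightarrow> E x u \<Longrightarrow> u \<in> C"
    and "\<And>u v. u \<in> C \<Longrightarrow> v \<in> C \<Longrightarrow> u \<noteq> v \<Longrightarrow> E u v"
  shows "simplicial_in W E x"
  using assms unfolding simplicial_in_def nbhd_def by blast

lemma simplicial_in_nbhdD:
  "simplicial_in W E x \<Longrightarrow> u \<in> W \<Longrightarrow> v \<in> W \<Longrightarrow> E x u \<Longrightarrow> E x v \<Longrightarrow> u \<noteq> v \<Longrightarrow> E u v"
  unfolding simplicial_in_def nbhd_def by blast

lemma simplicial_in_mono:
  "simplicial_in W E x \<Longrightarrow> x \<in> W' \<Longrightarrow> W' \<subseteq> W \<Longrightarrow> simplicial_in W' E x"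
  unfolding simplicial_in_def nbhd_def by blast

lemma shelling_feasible_empty: "shelling_feasible V E {}"
  unfolding shelling_feasible_def by auto

lemma shelling_feasible_subset: "shelling_feasible V E F \<Longrightarrow> F \<subseteq> V"
  unfolding shelling_feasible_def simplicial_in_def
  by (metis Diff_iff in_set_conv_nth subsetI)

lemma shelling_feasible_insert:
  assumes "shelling_feasible V E F" "simplicial_in (V - F) E x"
  shows "shelling_feasible V E (insert x F)"
proof -
  obtain fs where "shelling_sequence V E fs" "set fs = F"
    using assms(1) unfolding shelling_feasible_iff_sequence by blast
  then have "shelling_sequence V E (fs @ [x])" "set (fs @ [x]) = insert x F"
    using assms(2) by (simp_all add: shelling_sequence_append)
  then show ?thesis unfolding shelling_feasible_iff_sequence by blast
qed

lemma shelling_feasible_Un: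
  assumes "shelling_feasible V E F" "finite S"
    and "\<And>x. x \<in> S \<Longrightarrow> x \<notin> F \<Longrightarrow> simplicial_in (V - F) E x"
  shows "shelling_feasible V E (F \<union> S)"
  using assms(2,3)
proof (induction S rule: finite_induct)
  case empty
  with assms(1) show ?case by simp
next
  case (insert x S)
  show ?case
  proof (cases "x \<in> F \<union> S")
    case True
    with insert show ?thesis by (simp add: insert_absorb)
  next
    case False
    then have "simplicial_in (V - F) E x" using insert.prems by blast
    moreover from this have "x \<in> V - (F \<union> S)" using False unfolding simplicial_in_def by blast
    ultimately have "simplicial_in (V - (F \<union> S)) E x" by (rule simplicial_in_mono) blast
    moreover have "shelling_feasible V E (F \<union> S)" using insert.IH insert.prems by blast
    ultimately have "shelling_feasible V E (insert x (F \<union> S))"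
      by (rule shelling_feasible_insert[rotated])
    then show ?thesis by simp
  qed
qed

lemma shelling_feasible_remove_last:
  assumes "shelling_feasible V E P" "P \<noteq> {}"
  shows "\<exists>e\<in>P. shelling_feasible V E (P - {e})"
proof -
  obtain fs where fs: "shelling_sequence V E fs" "set fs = P"
    using assms(1) unfolding shelling_feasible_iff_sequence by blast
  with assms(2) obtain ds e where fs_snoc: "fs = ds @ [e]" by (metis rev_exhaust set_empty)
  have "shelling_sequence V E ds"
    using shelling_sequence_take[OF fs(1), of "length ds"] fs_snoc by simp
  moreover have "set ds = P - {e}"
    using fs fs_snoc unfolding shelling_sequence_def by auto
  ultimately have "shelling_feasible V E (P - {e})"
    unfolding shelling_feasible_iff_sequence by blast
  moreover have "e \<in> P" using fs(2) fs_snoc by auto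
  ultimately show ?thesis by blast
qed

lemma shelling_feasible_member_simplicial:
  assumes "shelling_feasible V E P" "x \<in> P"
  obtains D where "shelling_feasible V E D" "D \<subseteq> P" "x \<notin> D" "simplicial_in (V - D) E x"
proof -
  obtain fs where fs: "shelling_sequence V E fs" "set fs = P"
    using assms(1) unfolding shelling_feasible_iff_sequence by blast
  obtain j where j: "j < length fs" "fs ! j = x"
    using assms(2) unfolding fs(2)[symmetric] in_set_conv_nth by blast
  have "x \<in> set (drop j fs)" using j by (metis Cons_nth_drop_Suc list.set_intros(1))
  then have notin: "x \<notin> set (take j fs)"
    using set_take_disj_set_drop_if_distinct[OF shelling_sequenceD(1)[OF fs(1)] order_refl] by blast
  have simplicial: "simplicial_in (V - set (take j fs)) E x"
    using shelling_sequenceD(2)[OF fs(1) j(1)] j(2) by simp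
  have feas: "shelling_feasible V E (set (take j fs))"
    using shelling_sequence_take[OF fs(1), of j] unfolding shelling_feasible_iff_sequence by blast
  have sub: "set (take j fs) \<subseteq> P" unfolding fs(2)[symmetric] by (rule set_take_subset)
  show ?thesis by (rule that[OF feas sub notin simplicial])
qed

locale split_graph_shelling =
  fixes K I :: "'a set" and E :: "'a \<Rightarrow> 'a \<Rightarrow> bool"
  assumes split: "split_graph K I E"
begin

abbreviation feasible :: "'a set \<Rightarrow> bool" where
  "feasible \<equiv> shelling_feasible (K \<union> I) E"

lemma finite_vertices: "finite (K \<union> I)"
  and edge_vertices: "E u v \<Longrightarrow> u \<in> K \<union> I \<and> v \<in> K \<union> I"
  and edge_sym: "E u v \<Longrightarrow> E v u"
  and disjoint: "K \<inter> I = {}"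
  and clique: "u \<in> K \<Longrightarrow> v \<in> K \<Longrightarrow> u \<noteq> v \<Longrightarrow> E u v"
  and independent: "u \<in> I \<Longrightarrow> v \<in> I \<Longrightarrow> \<not> E u v"
  using split unfolding split_graph_def simple_graph_def by blast+

lemma nbr_of_independent: "i \<in> I \<Longrightarrow> E i u \<Longrightarrow> u \<in> K"
  using edge_vertices independent by blast

definition I_nbhd :: "'a \<Rightarrow> 'a set" where
  "I_nbhd k = {i \<in> I. E k i}"

definition K_non_nbhd :: "'a \<Rightarrow> 'a set" where
  "K_non_nbhd i = {k \<in> K. \<not> E i k}"

lemma simplicial_independent: "i \<in> I \<Longrightarrow> i \<in> W \<Longrightarrow> simplicial_in W E i"
  by (rule simplicial_inI[where C = K]) (simp_all add: nbr_of_independent clique)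

lemma simplicial_clique_vertex:
  assumes "k \<in> K" "k \<in> W" "W \<subseteq> K \<union> I" "W \<inter> I_nbhd k = {}"
  shows "simplicial_in W E k"
proof (rule simplicial_inI[where C = K])
  fix u assume "u \<in> W" "E k u"
  with assms(3,4) show "u \<in> K" unfolding I_nbhd_def by blast
qed (use assms(2) clique in simp_all)

lemma feasible_Un_independent:
  assumes "feasible F" "S \<subseteq> I"
  shows "feasible (F \<union> S)"
proof (rule shelling_feasible_Un[OF assms(1)])
  show "finite S" using assms(2) finite_vertices finite_subset by blast
  fix x assume "x \<in> S" "x \<notin> F"
  with assms(2) show "simplicial_in (K \<union> I - F) E x" by (simp add: simplicial_independent subset_iff)
qed

lemma feasible_Un_clique:
  assumes "feasible F" "T \<subseteq> K" "\<And>k. k \<in> T \<Longrightarrow> I_nbhd k \<subseteq> F"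
  shows "feasible (F \<union> T)"
proof (rule shelling_feasible_Un[OF assms(1)])
  show "finite T" using assms(2) finite_vertices finite_subset by blast
  fix x assume x: "x \<in> T" "x \<notin> F"
  show "simplicial_in (K \<union> I - F) E x"
    by (rule simplicial_clique_vertex) (use x assms(2) assms(3)[of x] in auto)
qed

definition vertex_path :: "'a \<Rightarrow> 'a set" where
  "vertex_path v = (if v \<in> I then {v} else insert v (I_nbhd v))"

definition edge_path :: "'a \<Rightarrow> 'a \<Rightarrow> 'a set" where
  "edge_path k i = insert k (K_non_nbhd i \<union> (I_nbhd k - {i}) \<union> \<Union> (I_nbhd ` K_non_nbhd i))"

lemma vertex_path_feasible:
  assumes "v \<in> K \<union> I"
  shows "feasible (vertex_path v)" and "feasible (vertex_path v - {v})"
proof -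
  have empty: "feasible {}" by (rule shelling_feasible_empty)
  have "feasible (vertex_path v) \<and> feasible (vertex_path v - {v})"
  proof (cases "v \<in> I")
    case True
    then have "feasible ({} \<union> {v})" using feasible_Un_independent[OF empty] by blast
    with True empty show ?thesis unfolding vertex_path_def by simp
  next
    case False
    then have vK: "v \<in> K" and v_notin: "v \<notin> I_nbhd v" using assms unfolding I_nbhd_def by auto
    have nbhd: "feasible ({} \<union> I_nbhd v)"
      by (rule feasible_Un_independent[OF empty]) (auto simp: I_nbhd_def)
    have "simplicial_in (K \<union> I - I_nbhd v) E v"
      by (rule simplicial_clique_vertex) (use vK v_notin in auto)
    then have "feasible (insert v (I_nbhd v))" using nbhd shelling_feasible_insert by simp
    with False nbhd v_notin show ?thesis unfolding vertex_path_def by simp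
  qed
  then show "feasible (vertex_path v)" "feasible (vertex_path v - {v})" by simp_all
qed

lemma edge_path_feasible:
  assumes "k \<in> K" "i \<in> I" "E k i"
  shows "feasible (edge_path k i)" and "feasible (edge_path k i - {k})"
proof -
  define S where "S = (I_nbhd k - {i}) \<union> \<Union> (I_nbhd ` K_non_nbhd i)"
  have S_feasible: "feasible ({} \<union> S)"
    by (rule feasible_Un_independent[OF shelling_feasible_empty]) (auto simp: S_def I_nbhd_def)
  have ST_feasible: "feasible (S \<union> K_non_nbhd i)"
    by (rule feasible_Un_clique) (use S_feasible in \<open>auto simp: S_def K_non_nbhd_def\<close>)
  have k_notin: "k \<notin> S \<union> K_non_nbhd i"
    using assms disjoint edge_sym[OF assms(3)] unfolding S_def I_nbhd_def K_non_nbhd_def by blast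
  have path_eq: "edge_path k i = insert k (S \<union> K_non_nbhd i)"
    unfolding edge_path_def S_def by blast
  have "simplicial_in (K \<union> I - (S \<union> K_non_nbhd i)) E k"
  proof (rule simplicial_inI[where C = "insert i {u \<in> K. E i u}"])
    fix u assume "u \<in> K \<union> I - (S \<union> K_non_nbhd i)" "E k u"
    then show "u \<in> insert i {u \<in> K. E i u}" unfolding S_def I_nbhd_def K_non_nbhd_def by auto
  next
    fix u v assume "u \<in> insert i {u \<in> K. E i u}" "v \<in> insert i {u \<in> K. E i u}" "u \<noteq> v"
    then show "E u v" using clique edge_sym[of i u] by auto
  qed (use assms(1) k_notin in simp)
  then have "feasible (insert k (S \<union> K_non_nbhd i))"
    by (rule shelling_feasible_insert[OF ST_feasible])
  with ST_feasible k_notin show "feasible (edge_path k i)" "feasible (edge_path k i - {k})"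
    unfolding path_eq by simp_all
qed

lemma edge_path_excludes_edge:
  assumes "k \<in> K" "i \<in> I"
  shows "i \<notin> edge_path k i"
  using assms disjoint edge_sym unfolding edge_path_def I_nbhd_def K_non_nbhd_def by blast

lemma edge_path_below:
  assumes P: "feasible P" "k \<in> P" and k: "k \<in> K" "i \<in> I_nbhd k" "i \<notin> P"
  shows "edge_path k i \<subseteq> P"
proof -
  obtain D where D: "feasible D" "D \<subseteq> P" "k \<notin> D" and simplicial: "simplicial_in (K \<union> I - D) E k"
    using shelling_feasible_member_simplicial[OF P] by blast
  have i: "i \<in> I" "E k i" "i \<in> K \<union> I - D" using k D(2) unfolding I_nbhd_def by auto
  have nbr_adj_i: "E i u" if "u \<in> K \<union> I - D" "E k u" "u \<noteq> i" for u
    using simplicial_in_nbhdD[OF simplicial i(3) that(1) i(2) that(2)] that(3) by blast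
  have I_part: "I_nbhd k - {i} \<subseteq> P"
  proof
    fix y assume y: "y \<in> I_nbhd k - {i}"
    show "y \<in> P"
    proof (rule ccontr)
      assume "y \<notin> P"
      with y D(2) have "E i y" using nbr_adj_i unfolding I_nbhd_def by auto
      with y i(1) independent show False unfolding I_nbhd_def by blast
    qed
  qed
  have K_part: "K_non_nbhd i \<subseteq> D"
  proof
    fix k' assume k': "k' \<in> K_non_nbhd i"
    then have "k' \<noteq> k" "k' \<noteq> i" using i(1) edge_sym[OF i(2)] disjoint unfolding K_non_nbhd_def by auto
    then show "k' \<in> D"
      using k' k(1) clique nbr_adj_i unfolding K_non_nbhd_def by blast
  qed
  have I_nbhd_part: "I_nbhd k' \<subseteq> P" if k': "k' \<in> K_non_nbhd i" for k'
  proof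
    fix y assume y: "y \<in> I_nbhd k'"
    obtain D' where D': "D' \<subseteq> D" "k' \<notin> D'" and simplicial': "simplicial_in (K \<union> I - D') E k'"
      using shelling_feasible_member_simplicial[OF D(1) K_part[THEN subsetD, OF k']] by blast
    show "y \<in> P"
      \<comment> \<open>if \<open>y\<close> outlives \<open>k'\<close>, then \<open>k'\<close> was shelled beside \<open>k\<close> and \<open>y\<close>, so \<open>E k y\<close>\<close>
    proof (cases "y \<in> D'")
      case True
      with D'(1) D(2) show ?thesis by blast
    next
      case False
      have "k' \<in> K" "k' \<noteq> k" using k' edge_sym[OF i(2)] unfolding K_non_nbhd_def by auto
      then have "E k' k" using k(1) clique by blast
      moreover have "k \<noteq> y" using k(1) y disjoint unfolding I_nbhd_def by blast
      moreover have "k \<in> K \<union> I - D'" "y \<in> K \<union> I - D'" using k(1) D(3) D'(1) False y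
        unfolding I_nbhd_def by auto
      ultimately have "E k y" using simplicial_in_nbhdD[OF simplicial'] y unfolding I_nbhd_def by blast
      moreover have "y \<noteq> i" using k' y edge_sym unfolding K_non_nbhd_def I_nbhd_def by blast
      ultimately show ?thesis using I_part y unfolding I_nbhd_def by blast
    qed
  qed
  show ?thesis unfolding edge_path_def using P(2) I_part K_part D(2) I_nbhd_part by blast
qed

lemma K_non_nbhd_empty_iff:
  assumes "i \<in> I"
  shows "K_non_nbhd i = {} \<longleftrightarrow> nbhd (K \<union> I) E i = K"
  using assms nbr_of_independent unfolding K_non_nbhd_def nbhd_def by blast

definition KI_edges :: "('a \<times> 'a) set" where
  "KI_edges = {(k, i). k \<in> K \<and> i \<in> I \<and> E k i}"

definition path_labels :: "('a + 'a \<times> 'a) set" where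
  "path_labels = Inl ` (K \<union> I) \<union> Inr ` KI_edges"

definition labelled_path :: "'a + 'a \<times> 'a \<Rightarrow> 'a set" where
  "labelled_path = case_sum vertex_path (case_prod edge_path)"

definition path_root :: "'a + 'a \<times> 'a \<Rightarrow> 'a" where
  "path_root = case_sum id fst"

lemma path_labelsE:
  assumes "l \<in> path_labels"
  obtains (vertex) v where "l = Inl v" "v \<in> K \<union> I"
    | (edge) k i where "l = Inr (k, i)" "k \<in> K" "i \<in> I" "E k i"
  using assms unfolding path_labels_def KI_edges_def by blast

lemma path_root_in_labelled_path: "path_root l \<in> labelled_path l"
  by (cases l) (auto simp: path_root_def labelled_path_def vertex_path_def edge_path_def)

lemma labelled_path_feasible:
  assumes "l \<in> path_labels"
  shows "feasible (labelled_path l)" and "feasible (labelled_path l - {path_root l})"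
  using assms
  by (auto elim!: path_labelsE
      simp: labelled_path_def path_root_def vertex_path_feasible edge_path_feasible)

lemma labelled_path_below:
  assumes "feasible P" "x \<in> P"
  shows "\<exists>l\<in>path_labels. path_root l = x \<and> labelled_path l \<subseteq> P"
proof (cases "x \<in> K \<and> \<not> I_nbhd x \<subseteq> P")
  case True
  then obtain i where i: "i \<in> I_nbhd x" "i \<notin> P" by blast
  then have "Inr (x, i) \<in> path_labels"
    using True unfolding path_labels_def KI_edges_def I_nbhd_def by auto
  moreover have "edge_path x i \<subseteq> P" using edge_path_below assms True i by blast
  ultimately show ?thesis by (force simp: labelled_path_def path_root_def)
next
  case False
  have "x \<in> K \<union> I" using shelling_feasible_subset assms by blast
  then have "Inl x \<in> path_labels" unfolding path_labels_def by blast
  moreover have "vertex_path x \<subseteq> P"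
    using False \<open>x \<in> K \<union> I\<close> assms(2) unfolding vertex_path_def by auto
  ultimately show ?thesis by (force simp: labelled_path_def path_root_def)
qed

lemma labelled_path_antichain:
  assumes no_full: "\<And>i. i \<in> I \<Longrightarrow> K_non_nbhd i \<noteq> {}"
    and l: "l \<in> path_labels" "l' \<in> path_labels"
    and root: "path_root l = path_root l'" and sub: "labelled_path l \<subseteq> labelled_path l'"
  shows "l = l'"
proof -
  have vertex_edge: "\<not> vertex_path k \<subseteq> edge_path k i" if "k \<in> K" "i \<in> I" "E k i" for k i
  proof -
    have "i \<in> vertex_path k" using that disjoint unfolding vertex_path_def I_nbhd_def by auto
    then show ?thesis using edge_path_excludes_edge that by blast
  qed
  have edge_vertex: "\<not> edge_path k i \<subseteq> vertex_path k" if edge: "k \<in> K" "i \<in> I" "E k i" for k i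
  proof -
    obtain k' where k': "k' \<in> K_non_nbhd i" using no_full edge(2) by blast
    then have "k' \<in> edge_path k i" unfolding edge_path_def by blast
    moreover have "k' \<notin> vertex_path k"
      using k' edge disjoint edge_sym[OF edge(3)]
      unfolding vertex_path_def K_non_nbhd_def I_nbhd_def by auto
    ultimately show ?thesis by blast
  qed
  have edge_edge: "\<not> edge_path k i \<subseteq> edge_path k i'"
    if "k \<in> K" "i \<in> I" "i' \<in> I" "E k i'" "i \<noteq> i'" for k i i'
  proof -
    have "i' \<in> edge_path k i" using that unfolding edge_path_def I_nbhd_def by blast
    then show ?thesis using edge_path_excludes_edge that by blast
  qed
  from l(1) show ?thesis
  proof (cases rule: path_labelsE)
    case (vertex v)
    from l(2) show ?thesis
    proof (cases rule: path_labelsE)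
      case (edge k i)
      with vertex root sub vertex_edge show ?thesis by (simp add: labelled_path_def path_root_def)
    qed (use vertex root in \<open>simp add: path_root_def\<close>)
  next
    case (edge k i)
    from l(2) show ?thesis
    proof (cases rule: path_labelsE)
      case (vertex v)
      with edge root sub edge_vertex show ?thesis by (simp add: labelled_path_def path_root_def)
    next
      case (edge k' i')
      with \<open>l = Inr (k, i)\<close> \<open>k \<in> K\<close> \<open>i \<in> I\<close> root sub edge_edge show ?thesis
        by (auto simp: labelled_path_def path_root_def)
    qed
  qed
qed

lemma card_KI_edges: "card KI_edges = card {e. \<exists>k\<in>K. \<exists>i\<in>I. E k i \<and> e = {k, i}}"
proof -
  have "{e. \<exists>k\<in>K. \<exists>i\<in>I. E k i \<and> e = {k, i}} = (\<lambda>(k, i). {k, i}) ` KI_edges"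
    unfolding KI_edges_def by auto
  moreover have "inj_on (\<lambda>(k, i). {k, i}) KI_edges"
    using disjoint unfolding KI_edges_def by (auto intro!: inj_onI simp: doubleton_eq_iff)
  ultimately show ?thesis by (simp add: card_image)
qed

lemma card_path_labels: "card path_labels = card (K \<union> I) + card KI_edges"
proof -
  have "finite KI_edges"
    using finite_vertices by (intro finite_subset[of KI_edges "K \<times> I"]) (auto simp: KI_edges_def)
  with finite_vertices show ?thesis
    unfolding path_labels_def by (subst card_Un_disjoint) (auto simp: card_image)
qed

theorem card_shelling_paths:
  assumes "\<And>i. i \<in> I \<Longrightarrow> K_non_nbhd i \<noteq> {}"
  shows "card {P. antimatroid_path feasible P} = card (K \<union> I) + card KI_edges"
proof -
  note rooted_family = antimatroid_paths_eq_rooted_family[where root = path_root,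
      OF path_root_in_labelled_path labelled_path_feasible labelled_path_below
      labelled_path_antichain[OF assms] shelling_feasible_remove_last]
  show ?thesis by (simp add: rooted_family card_image card_path_labels)
qed

end

theorem mainTheorem11:
  fixes K I :: "'a set" and E :: "'a \<Rightarrow> 'a \<Rightarrow> bool"
  assumes "split_graph K I E"
    and "\<forall>i\<in>I. nbhd (K \<union> I) E i \<noteq> K"
  shows "card {P. antimatroid_path (shelling_feasible (K \<union> I) E) P}
    = card (K \<union> I) + card {e. \<exists>k\<in>K. \<exists>i\<in>I. E k i \<and> e = {k, i}}"
proof -
  interpret split_graph_shelling K I E by (rule split_graph_shelling.intro) fact
  have "K_non_nbhd i \<noteq> {}" if "i \<in> I" for i
    using assms(2) that K_non_nbhd_empty_iff by blast
  then show ?thesis using card_shelling_paths card_KI_edges by simp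
qed

end
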